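(* Let $a:[0,1]\to[0,\infty)$ be a bounded measurable function (so $a\in L^\infty(0,1)$ and $a\ge 0$). There exist constants $T_0>0$ and $\kappa_0>0$, independent of $N$ (equivalently of $h=1/(N+1)$), such that for every integer $N\ge1$, every $T>T_0$ and all $U^0_h,U^1_h\in\mathbb{C}^N$, the solution $U_h=[u_j]_{1\le j\le N}$ of $$M_hU_h''(t)+K_hU_h(t)+L_hU_h(t)=0\quad (t\in(0,T)),\qquad U_h(0)=U_h^0,\ U_h'(0)=U_h^1,$$ satisfies $$\int_0^T\left(\left|\frac{u_1(t)}{h}\right|^2+\left|\frac{u_1'(t)}{2}\right|^2\right)dt\ \ge\ \kappa_0\left(\|U_h^0\|_1^2+\|U_h^1\|_M^2\right).$$
   Context: For an integer $N\ge1$ let $h=1/(N+1)$ and $x_j=jh$, $0\le j\le N+1$; set $a_j=a(x_j)$. Define the $N\times N$ real matrices $K_h=\frac1h\,\mathrm{tridiag}(-1,2,-1)$ (diagonal entries $2/h$, entries $-1/h$ on the first sub- and super-diagonals, zero elsewhere), $M_h=\frac h4\,\mathrm{tridiag}(1,2,1)$ (diagonal $h/2$, off-diagonal neighbours $h/4$), and $L_h=h\,\mathrm{diag}(a_1,\dots,a_N)$. On $\mathbb{C}^N$ let $\langle U,W\rangle=\sum_j u_j\overline{w_j}$ be the canonical inner product, and define $\langle U,W\rangle_1=\langle (K_h+L_h)U,W\rangle$ and $\langle U,W\rangle_M=\langle M_hU,W\rangle$, with associated norms $\|\cdot\|_1$, $\|\cdot\|_M$. *)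

theory Defs
  imports "HOL-Analysis.Analysis"
begin

text \<open>Vectors in C^N are functions nat => complex, only the entries 1..N matter.
  Matrices are functions nat => nat => real, with indices 1..N.\<close>

definition mesh :: "nat \<Rightarrow> real" where
  "mesh N = 1 / (real N + 1)"

definition K_h :: "nat \<Rightarrow> nat \<Rightarrow> nat \<Rightarrow> real" where
  "K_h N i j = (if i = j then 2 / mesh N
                else if i = j + 1 \<or> j = i + 1 then - 1 / mesh N else 0)"

definition M_h :: "nat \<Rightarrow> nat \<Rightarrow> nat \<Rightarrow> real" where
  "M_h N i j = (if i = j then mesh N / 2
                else if i = j + 1 \<or> j = i + 1 then mesh N / 4 else 0)"

definition L_h :: "(real \<Rightarrow> real) \<Rightarrow> nat \<Rightarrow> nat \<Rightarrow> nat \<Rightarrow> real" where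
  "L_h a N i j = (if i = j then mesh N * a (real i * mesh N) else 0)"

definition matvec :: "nat \<Rightarrow> (nat \<Rightarrow> nat \<Rightarrow> real) \<Rightarrow> (nat \<Rightarrow> complex) \<Rightarrow> nat \<Rightarrow> complex" where
  "matvec N A U i = (\<Sum>j = 1..N. complex_of_real (A i j) * U j)"

definition cinner :: "nat \<Rightarrow> (nat \<Rightarrow> complex) \<Rightarrow> (nat \<Rightarrow> complex) \<Rightarrow> complex" where
  "cinner N U W = (\<Sum>j = 1..N. U j * cnj (W j))"

definition norm1_sq :: "(real \<Rightarrow> real) \<Rightarrow> nat \<Rightarrow> (nat \<Rightarrow> complex) \<Rightarrow> real" where
  "norm1_sq a N U = Re (cinner N (matvec N (\<lambda>i j. K_h N i j + L_h a N i j) U) U)"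

definition normM_sq :: "nat \<Rightarrow> (nat \<Rightarrow> complex) \<Rightarrow> real" where
  "normM_sq N U = Re (cinner N (matvec N (M_h N) U) U)"

end

(* Sidewise energy estimates. Extend the solution by u_0 = u_(N+1) = 0 and attach to the edge
   [x_k, x_(k+1)] the energy density
     e_k = |(u_k' + u_(k+1)')/2|^2 + |(u_(k+1) - u_k)/h|^2,
   so that the observed quantity is e_0 and the conserved energy ||U'||_M^2 + ||U||_1^2 equals
   E = h * sum_k e_k + h * sum_k a_k |u_k|^2.
   Multiplying the equation at node k by the centred difference quotient
   W_k = (u_(k+1) - u_(k-1))/(2h) shows that e_k - e_(k-1) is 2h times the time derivative of
   V_k . W_k, with V_k the averaged velocity, plus the potential term 2h a_k u_k . W_k.
   After integration over (0,T) the boundary terms are bounded by the energy and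
   |u_k|^2 <= h * sum_(i<k) e_i, so a discrete Gronwall lemma bounds Q_k = int_0^T e_k by
   exp(gamma) (Q_0 + 4E) with gamma = 2 + 2B(1+B), uniformly in h because h (N+1) = 1. Conversely,
   conservation of energy gives h * sum_k Q_k >= T E / (1+B), hence E <= exp(gamma) Q_0 once
   T > (1+B)(4 exp(gamma) + 1).
   Only the nodal values of a and the bounds 0 <= a <= B enter. *)

theory Submission
  imports Defs
begin

section \<open>Discrete calculus\<close>

lemmas has_vector_derivative_scaleR_right =
  bounded_linear.has_vector_derivative[OF bounded_linear_scaleR_right]

lemmas has_vector_derivative_inner =
  bounded_bilinear.has_vector_derivative[OF bounded_bilinear_inner]

lemma sum_stiffness_by_parts_upto:
  fixes X Y :: "nat \<Rightarrow> 'a::real_inner"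
  assumes "Y 0 = 0"
  shows "(\<Sum>i = 1..n. (2 *\<^sub>R X i - X (i - 1) - X (i + 1)) \<bullet> Y i)
       = (\<Sum>k<n. (X (k + 1) - X k) \<bullet> (Y (k + 1) - Y k)) - (X (n + 1) - X n) \<bullet> Y n"
  by (induction n) (use assms in \<open>simp_all add: algebra_simps inner_diff_left inner_diff_right\<close>)

lemma sum_stiffness_by_parts:
  fixes X Y :: "nat \<Rightarrow> 'a::real_inner"
  assumes "Y 0 = 0" "Y (N + 1) = 0"
  shows "(\<Sum>i = 1..N. (2 *\<^sub>R X i - X (i - 1) - X (i + 1)) \<bullet> Y i)
       = (\<Sum>k\<le>N. (X (k + 1) - X k) \<bullet> (Y (k + 1) - Y k))"
  using sum_stiffness_by_parts_upto[of Y X N] assms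
  by (simp add: lessThan_Suc_atMost[symmetric] inner_diff_right)

lemma sum_mass_by_parts_upto:
  fixes X Y :: "nat \<Rightarrow> 'a::real_inner"
  assumes "Y 0 = 0"
  shows "(\<Sum>i = 1..n. (X (i - 1) + 2 *\<^sub>R X i + X (i + 1)) \<bullet> Y i)
       = (\<Sum>k<n. (X k + X (k + 1)) \<bullet> (Y k + Y (k + 1))) + (X n + X (n + 1)) \<bullet> Y n"
  by (induction n) (use assms in \<open>simp_all add: algebra_simps inner_add_left inner_add_right\<close>)

lemma sum_mass_by_parts:
  fixes X Y :: "nat \<Rightarrow> 'a::real_inner"
  assumes "Y 0 = 0" "Y (N + 1) = 0"
  shows "(\<Sum>i = 1..N. (X (i - 1) + 2 *\<^sub>R X i + X (i + 1)) \<bullet> Y i)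
       = (\<Sum>k\<le>N. (X k + X (k + 1)) \<bullet> (Y k + Y (k + 1)))"
  using sum_mass_by_parts_upto[of Y X N] assms by (simp add: lessThan_Suc_atMost[symmetric])

lemma norm_midpoint_power2_le:
  fixes x y :: "'a::real_inner"
  shows "(norm ((1/2) *\<^sub>R (x + y)))\<^sup>2 \<le> ((norm x)\<^sup>2 + (norm y)\<^sup>2) / 2"
proof -
  have "0 \<le> (norm (x - y))\<^sup>2" by simp
  then show ?thesis unfolding power2_norm_eq_inner
    by (simp add: inner_add_left inner_add_right inner_diff_left inner_diff_right inner_commute)
qed

lemma abs_inner_le_weighted:
  fixes x y :: "'a::real_inner"
  assumes "l > 0"
  shows "\<bar>x \<bullet> y\<bar> \<le> (l * (norm x)\<^sup>2 + (norm y)\<^sup>2 / l) / 2"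
proof -
  have "0 \<le> (l * norm x - norm y)\<^sup>2" by simp
  then have "norm x * norm y \<le> (l * (norm x)\<^sup>2 + (norm y)\<^sup>2 / l) / 2"
    using assms by (simp add: field_simps power2_eq_square)
  then show ?thesis using Cauchy_Schwarz_ineq2[of x y] by linarith
qed

(* Node y with neighbours x, z, velocities p, q, r and accelerations x'', y'', z'': under the node
   equation, the jump of the edge energy across y is 2h times the time derivative of
   (averaged velocity) . (centred difference quotient), plus the potential term. *)
lemma sidewise_identity:
  fixes x y z p q r x'' y'' z'' :: "'a::real_inner"
  assumes h: "h > 0"
    and eq: "(h/4) *\<^sub>R (x'' + 2 *\<^sub>R y'' + z'') + (1/h) *\<^sub>R (2 *\<^sub>R y - x - z) + (h*c) *\<^sub>R y = 0"
  shows "((norm ((1/2) *\<^sub>R (q + r)))\<^sup>2 + (norm ((1/h) *\<^sub>R (z - y)))\<^sup>2)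
       - ((norm ((1/2) *\<^sub>R (p + q)))\<^sup>2 + (norm ((1/h) *\<^sub>R (y - x)))\<^sup>2)
     = 2*h*(((1/4) *\<^sub>R (x'' + 2 *\<^sub>R y'' + z'')) \<bullet> ((1/(2*h)) *\<^sub>R (z - x))
            + ((1/4) *\<^sub>R (p + 2 *\<^sub>R q + r)) \<bullet> ((1/(2*h)) *\<^sub>R (r - p)))
       + 2*h*c*(y \<bullet> ((1/(2*h)) *\<^sub>R (z - x)))"
proof -
  have "(1/h) *\<^sub>R ((h/4) *\<^sub>R (x'' + 2 *\<^sub>R y'' + z'') + (1/h) *\<^sub>R (2 *\<^sub>R y - x - z) + (h*c) *\<^sub>R y) = 0"
    using eq by simp
  then have acc: "(1/4) *\<^sub>R (x'' + 2 *\<^sub>R y'' + z'') = - (1/h^2) *\<^sub>R (2 *\<^sub>R y - x - z) - c *\<^sub>R y"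
    using h by (simp add: scaleR_add_right power2_eq_square algebra_simps)
  show ?thesis
    unfolding acc power2_norm_eq_inner using h
    by (simp add: inner_add_left inner_add_right inner_diff_left inner_diff_right
        inner_commute power2_eq_square field_simps)
qed

lemma discrete_gronwall_step:
  fixes q q' r m b h c :: real
  assumes h: "0 < h" "h \<le> 1" and c: "0 \<le> c" and b: "0 \<le> b"
    and m: "q' \<le> m" "r \<le> m" "0 \<le> m"
    and q: "q \<le> q' + b + h*c*r + (h/2)*(q' + q)"
  shows "q \<le> (1 + h*(2 + 2*c)) * m + 2*b"
proof -
  have "h*c*r \<le> h*c*m" "(1 + h/2)*q' \<le> (1 + h/2)*m"
    using h c m by (simp_all add: mult_left_mono)
  moreover have "(1 - h/2)*q \<le> (1 + h/2)*q' + b + h*c*r"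
    using q by (simp add: algebra_simps add_divide_distrib)
  ultimately have "(1 - h/2)*q \<le> (1 + h/2 + h*c)*m + b"
    by (simp add: algebra_simps)
  also have "\<dots> \<le> (1 - h/2)*((1 + h*(2 + 2*c))*m + 2*b)"
  proof -
    have "h*h*(1 + c) \<le> h*(1 + c)" using h c by (simp add: mult_right_le_one_le)
    then have "1 + h/2 + h*c \<le> (1 - h/2)*(1 + h*(2 + 2*c))" by (simp add: algebra_simps)
    then have "(1 + h/2 + h*c)*m \<le> (1 - h/2)*(1 + h*(2 + 2*c))*m"
      using m by (simp add: mult_right_mono)
    moreover have "b \<le> (1 - h/2)*(2*b)" using h b by (simp add: algebra_simps mult_right_le_one_le)
    ultimately show ?thesis by (simp add: algebra_simps)
  qed
  finally show ?thesis using h by simp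
qed

lemma one_plus_power_le_exp:
  fixes x :: real
  assumes "0 \<le> x"
  shows "(1 + x)^k \<le> exp (real k * x)"
proof -
  have "(1 + x)^k \<le> exp x ^ k"
    using assms by (intro power_mono) (auto simp: exp_ge_add_one_self_aux add.commute)
  then show ?thesis by (simp add: exp_of_nat_mult)
qed

lemma discrete_gronwall_power:
  fixes Q b :: "nat \<Rightarrow> real"
  assumes h: "0 < h" "h * (real N + 1) \<le> 1" and c: "0 \<le> c"
    and Q0: "0 \<le> Q 0" and b: "\<And>k. 0 \<le> b k"
    and step: "\<And>k. 1 \<le> k \<Longrightarrow> k \<le> N \<Longrightarrow>
       Q k \<le> Q (k-1) + b k + h*c*(h*(\<Sum>i<k. Q i)) + (h/2)*(Q (k-1) + Q k)"
    and k: "k \<le> N"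
  shows "\<forall>i\<le>k. Q i \<le> (1 + h*(2 + 2*c))^k * (Q 0 + 2*(\<Sum>j=1..k. b j))"
  using k
proof (induction k)
  case 0
  then show ?case by simp
next
  case (Suc k)
  define \<rho> where "\<rho> = 1 + h*(2 + 2*c)"
  define M where "M k = \<rho>^k * (Q 0 + 2*(\<Sum>j=1..k. b j))" for k
  have \<rho>: "1 \<le> \<rho>" using h c by (simp add: \<rho>_def)
  have M_nonneg: "0 \<le> M k" using \<rho> Q0 b by (simp add: M_def sum_nonneg)
  have IH: "Q i \<le> M k" if "i \<le> k" for i using Suc that by (simp add: M_def \<rho>_def)
  have "h * real (Suc k) \<le> h * (real N + 1)" using h Suc.prems by (intro mult_left_mono) auto
  then have h1: "h * real (Suc k) \<le> 1" using h by linarith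
  moreover have "0 \<le> h * real k" using h by simp
  ultimately have "h \<le> 1" by (simp add: algebra_simps)
  have "h*(\<Sum>i<Suc k. Q i) \<le> h*(\<Sum>i<Suc k. M k)"
    using IH h by (intro mult_left_mono sum_mono) auto
  also have "\<dots> = (h * real (Suc k)) * M k" by simp
  also have "\<dots> \<le> M k" using h1 M_nonneg h by (intro mult_left_le_one_le) auto
  finally have "Q (Suc k) \<le> \<rho> * M k + 2 * b (Suc k)"
    unfolding \<rho>_def using step[of "Suc k"] Suc.prems h \<open>h \<le> 1\<close> c b IH M_nonneg
    by (intro discrete_gronwall_step) auto
  also have "\<dots> \<le> M (Suc k)"
  proof -
    have "1 * (2 * b (Suc k)) \<le> \<rho>^(Suc k) * (2 * b (Suc k))"
      using b[of "Suc k"] \<rho> by (intro mult_right_mono one_le_power) auto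
    then show ?thesis by (simp add: M_def algebra_simps)
  qed
  moreover have "M k \<le> M (Suc k)"
  proof -
    have "M k \<le> \<rho>^(Suc k) * (Q 0 + 2*(\<Sum>j=1..k. b j))"
      unfolding M_def using \<rho> Q0 b by (intro mult_right_mono) (auto simp: sum_nonneg)
    also have "\<dots> \<le> M (Suc k)"
      unfolding M_def using \<rho> b by (intro mult_left_mono) auto
    finally show ?thesis .
  qed
  ultimately show ?case
    using IH unfolding M_def \<rho>_def by (auto simp: le_Suc_eq intro: order_trans)
qed

lemma discrete_gronwall:
  fixes Q b :: "nat \<Rightarrow> real"
  assumes h: "0 < h" "h * (real N + 1) \<le> 1" and c: "0 \<le> c"
    and Q0: "0 \<le> Q 0" and b: "\<And>k. 0 \<le> b k"
    and step: "\<And>k. 1 \<le> k \<Longrightarrow> k \<le> N \<Longrightarrow>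
       Q k \<le> Q (k-1) + b k + h*c*(h*(\<Sum>i<k. Q i)) + (h/2)*(Q (k-1) + Q k)"
    and k: "k \<le> N"
  shows "Q k \<le> exp (2 + 2*c) * (Q 0 + 2*(\<Sum>j=1..k. b j))"
proof -
  have "Q k \<le> (1 + h*(2 + 2*c))^k * (Q 0 + 2*(\<Sum>j=1..k. b j))"
    using discrete_gronwall_power[OF assms] by blast
  also have "\<dots> \<le> exp (2 + 2*c) * (Q 0 + 2*(\<Sum>j=1..k. b j))"
  proof (rule mult_right_mono)
    have "h * real k \<le> h * (real N + 1)" using h k by (intro mult_left_mono) auto
    then have "h * real k \<le> 1" using h by linarith
    then have "(h * real k) * (2 + 2*c) \<le> 2 + 2*c"
      using h c by (intro mult_left_le_one_le) auto
    then have "exp (real k * (h*(2 + 2*c))) \<le> exp (2 + 2*c)"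
      by (simp add: mult_ac)
    moreover have "(1 + h*(2 + 2*c))^k \<le> exp (real k * (h*(2 + 2*c)))"
      using h c by (intro one_plus_power_le_exp) simp
    ultimately show "(1 + h*(2 + 2*c))^k \<le> exp (2 + 2*c)" by linarith
  qed (use Q0 b in \<open>simp add: sum_nonneg\<close>)
  finally show ?thesis .
qed

section \<open>The finite element matrices\<close>

definition zero_ext :: "nat \<Rightarrow> (nat \<Rightarrow> complex) \<Rightarrow> nat \<Rightarrow> complex" where
  "zero_ext N X k = (if 1 \<le> k \<and> k \<le> N then X k else 0)"

lemma zero_ext_boundary [simp]: "zero_ext N X 0 = 0" "zero_ext N X (Suc N) = 0"
  by (simp_all add: zero_ext_def)

lemma mesh_pos: "0 < mesh N"
  by (simp add: mesh_def)

lemma Re_cinner: "Re (cinner N X Y) = (\<Sum>i=1..N. X i \<bullet> Y i)"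
  by (simp add: cinner_def inner_complex_def)

lemma Re_cinner_matvec: "Re (cinner N (matvec N A X) Y) = (\<Sum>i=1..N. \<Sum>j=1..N. A i j * (X j \<bullet> Y i))"
  by (simp add: cinner_def matvec_def sum_distrib_left sum_distrib_right inner_complex_def
      sum.distrib algebra_simps)

lemma matvec_tridiagonal:
  assumes i: "1 \<le> i" "i \<le> N"
    and A: "\<And>j. A i j = (if i = j then d else if i = j + 1 \<or> j = i + 1 then c else 0)"
  shows "matvec N A X i = d *\<^sub>R zero_ext N X i + c *\<^sub>R (zero_ext N X (i - 1) + zero_ext N X (i + 1))"
proof -
  have "matvec N A X i = (\<Sum>j=1..N. (if j = i then d *\<^sub>R X j else 0)
      + (if j = i - 1 then c *\<^sub>R X j else 0) + (if j = i + 1 then c *\<^sub>R X j else 0))"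
    unfolding matvec_def using i by (intro sum.cong) (auto simp: A scaleR_conv_of_real)
  then show ?thesis
    using i by (simp add: sum.distrib zero_ext_def scaleR_add_right)
qed

lemma matvec_K_h:
  assumes "1 \<le> i" "i \<le> N"
  shows "matvec N (K_h N) X i
    = (1 / mesh N) *\<^sub>R (2 *\<^sub>R zero_ext N X i - zero_ext N X (i - 1) - zero_ext N X (i + 1))"
  using matvec_tridiagonal[OF assms, of "K_h N" "2 / mesh N" "- 1 / mesh N"]
  by (simp add: K_h_def algebra_simps)

lemma matvec_M_h:
  assumes "1 \<le> i" "i \<le> N"
  shows "matvec N (M_h N) X i
    = (mesh N / 4) *\<^sub>R (zero_ext N X (i - 1) + 2 *\<^sub>R zero_ext N X i + zero_ext N X (i + 1))"
  using matvec_tridiagonal[OF assms, of "M_h N" "mesh N / 2" "mesh N / 4"]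
  by (simp add: M_h_def algebra_simps)

lemma matvec_L_h:
  assumes "1 \<le> i" "i \<le> N"
  shows "matvec N (L_h a N) X i = (mesh N * a (real i * mesh N)) *\<^sub>R zero_ext N X i"
  using matvec_tridiagonal[OF assms, of "L_h a N" "mesh N * a (real i * mesh N)" 0]
  by (simp add: L_h_def)

lemma Re_cinner_matvec_commute:
  assumes "\<And>i j. i \<in> {1..N} \<Longrightarrow> j \<in> {1..N} \<Longrightarrow> A i j = A j i"
  shows "Re (cinner N (matvec N A X) Y) = Re (cinner N (matvec N A Y) X)"
  unfolding Re_cinner_matvec
  by (subst sum.swap) (auto intro!: sum.cong simp: assms inner_commute)

lemma quadratic_form_has_vector_derivative:
  assumes sym: "\<And>i j. i \<in> {1..N} \<Longrightarrow> j \<in> {1..N} \<Longrightarrow> A i j = A j i"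
    and der: "\<And>j. j \<in> {1..N} \<Longrightarrow> (X j has_vector_derivative X' j) (at t within S)"
  shows "((\<lambda>s. Re (cinner N (matvec N A (\<lambda>j. X j s)) (\<lambda>j. X j s))) has_vector_derivative
          2 * Re (cinner N (matvec N A (\<lambda>j. X j t)) X')) (at t within S)"
proof -
  let ?I = "{1..N}"
  have "((\<lambda>s. Re (cinner N (matvec N A (\<lambda>j. X j s)) (\<lambda>j. X j s))) has_vector_derivative
      (\<Sum>i\<in>?I. \<Sum>j\<in>?I. A i j * (X j t \<bullet> X' i + X' j \<bullet> X i t))) (at t within S)"
    unfolding Re_cinner_matvec
    using has_vector_derivative_scaleR_right[OF has_vector_derivative_inner[OF der der]]
    by (intro has_vector_derivative_sum) simp
  moreover have "(\<Sum>i\<in>?I. \<Sum>j\<in>?I. A i j * (X j t \<bullet> X' i + X' j \<bullet> X i t))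
      = 2 * Re (cinner N (matvec N A (\<lambda>j. X j t)) X')"
    using Re_cinner_matvec_commute[OF sym, where X = X' and Y = "\<lambda>j. X j t"]
    unfolding Re_cinner_matvec by (simp add: distrib_left sum.distrib inner_commute)
  ultimately show ?thesis by simp
qed

lemma Re_cinner_zero_ext: "Re (cinner N Y X) = (\<Sum>i=1..N. Y i \<bullet> zero_ext N X i)"
  unfolding Re_cinner by (intro sum.cong) (auto simp: zero_ext_def)

lemma normM_sq_eq_edge_sum:
  "normM_sq N X = mesh N * (\<Sum>k\<le>N. (norm ((1/2) *\<^sub>R (zero_ext N X k + zero_ext N X (Suc k))))\<^sup>2)"
proof -
  let ?X = "zero_ext N X"
  have "normM_sq N X = (\<Sum>i=1..N. ((mesh N / 4) *\<^sub>R (?X (i - 1) + 2 *\<^sub>R ?X i + ?X (i + 1))) \<bullet> ?X i)"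
    unfolding normM_sq_def Re_cinner_zero_ext by (intro sum.cong) (auto simp: matvec_M_h)
  also have "\<dots> = (mesh N / 4) * (\<Sum>k\<le>N. (?X k + ?X (k + 1)) \<bullet> (?X k + ?X (k + 1)))"
    unfolding inner_scaleR_left sum_distrib_left[symmetric] using sum_mass_by_parts[of ?X N ?X] by simp
  finally show ?thesis
    by (simp add: sum_distrib_left power_divide power2_norm_eq_inner)
qed

lemma stiffness_form_eq_edge_sum:
  "Re (cinner N (matvec N (K_h N) X) X)
    = mesh N * (\<Sum>k\<le>N. (norm ((1 / mesh N) *\<^sub>R (zero_ext N X (Suc k) - zero_ext N X k)))\<^sup>2)"
proof -
  let ?X = "zero_ext N X" and ?h = "mesh N"
  have "Re (cinner N (matvec N (K_h N) X) X)
      = (\<Sum>i=1..N. ((1 / ?h) *\<^sub>R (2 *\<^sub>R ?X i - ?X (i - 1) - ?X (i + 1))) \<bullet> ?X i)"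
    unfolding Re_cinner_zero_ext by (intro sum.cong) (auto simp: matvec_K_h)
  also have "\<dots> = (1 / ?h) * (\<Sum>k\<le>N. (?X (k + 1) - ?X k) \<bullet> (?X (k + 1) - ?X k))"
    unfolding inner_scaleR_left sum_distrib_left[symmetric] using sum_stiffness_by_parts[of ?X N ?X] by simp
  finally show ?thesis
    using mesh_pos[of N]
    by (simp add: sum_distrib_left power2_norm_eq_inner[symmetric] power_mult_distrib power2_eq_square)
qed

lemma potential_form_eq:
  "Re (cinner N (matvec N (L_h a N) X) X) = mesh N * (\<Sum>k=1..N. a (real k * mesh N) * (norm (X k))\<^sup>2)"
  unfolding Re_cinner sum_distrib_left
  by (intro sum.cong) (auto simp: matvec_L_h zero_ext_def power2_norm_eq_inner)

lemma norm1_sq_split: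
  "norm1_sq a N X = Re (cinner N (matvec N (K_h N) X) X) + Re (cinner N (matvec N (L_h a N) X) X)"
  by (simp add: norm1_sq_def cinner_def matvec_def sum.distrib distrib_right ring_distribs)

lemma norm1_sq_cong: "(\<And>j. j \<in> {1..N} \<Longrightarrow> X j = Y j) \<Longrightarrow> norm1_sq a N X = norm1_sq a N Y"
  unfolding norm1_sq_def cinner_def matvec_def by (auto intro!: sum.cong arg_cong[where f = Re])

lemma normM_sq_cong: "(\<And>j. j \<in> {1..N} \<Longrightarrow> X j = Y j) \<Longrightarrow> normM_sq N X = normM_sq N Y"
  unfolding normM_sq_def cinner_def matvec_def by (auto intro!: sum.cong arg_cong[where f = Re])

section \<open>Energy conservation\<close>

locale semidiscrete_wave =
  fixes a :: "real \<Rightarrow> real" and B :: real and N :: nat and T :: real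
    and u u' u'' :: "nat \<Rightarrow> real \<Rightarrow> complex"
  assumes N_pos: "1 \<le> N" and T_pos: "0 < T"
    and a_nonneg: "\<forall>x\<in>{0..1}. 0 \<le> a x" and a_le_B: "\<forall>x\<in>{0..1}. a x \<le> B"
    and der: "\<forall>j\<in>{1..N}. \<forall>t\<in>{0..T}.
          (u j has_vector_derivative u' j t) (at t within {0..T}) \<and>
          (u' j has_vector_derivative u'' j t) (at t within {0..T})"
    and eq: "\<forall>t\<in>{0<..<T}. \<forall>i\<in>{1..N}.
          matvec N (M_h N) (\<lambda>j. u'' j t) i
          + matvec N (K_h N) (\<lambda>j. u j t) i
          + matvec N (L_h a N) (\<lambda>j. u j t) i = 0"
begin

definition h :: real where "h = mesh N"
definition U :: "nat \<Rightarrow> real \<Rightarrow> complex" where "U k t = zero_ext N (\<lambda>j. u j t) k"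
definition U' :: "nat \<Rightarrow> real \<Rightarrow> complex" where "U' k t = zero_ext N (\<lambda>j. u' j t) k"
definition U'' :: "nat \<Rightarrow> real \<Rightarrow> complex" where "U'' k t = zero_ext N (\<lambda>j. u'' j t) k"
definition a_node :: "nat \<Rightarrow> real" where "a_node k = a (real k * h)"

lemma B_nonneg: "0 \<le> B"
  using a_nonneg a_le_B order_trans[of 0 "a 0" B] by simp

lemma h_pos: "0 < h"
  by (simp add: h_def mesh_pos)

lemma h_mult_nodes: "h * (real N + 1) = 1"
  by (simp add: h_def mesh_def)

lemma a_node_bounds:
  assumes "1 \<le> k" "k \<le> N"
  shows "0 \<le> a_node k" "a_node k \<le> B"
proof -
  have "real k * h \<le> (real N + 1) * h" using assms h_pos by (intro mult_right_mono) auto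
  then have "real k * h \<in> {0..1}" using h_mult_nodes h_pos by (simp add: mult.commute)
  then show "0 \<le> a_node k" "a_node k \<le> B" using a_nonneg a_le_B by (simp_all add: a_node_def)
qed

lemma U_0 [simp]: "U 0 t = 0"
  by (simp add: U_def)

lemma U_eq: "U k = (if 1 \<le> k \<and> k \<le> N then u k else (\<lambda>_. 0))"
  and U'_eq: "U' k = (if 1 \<le> k \<and> k \<le> N then u' k else (\<lambda>_. 0))"
  by (auto simp: U_def U'_def zero_ext_def)

lemma U_has_vector_derivative:
  "t \<in> {0..T} \<Longrightarrow> (U k has_vector_derivative U' k t) (at t within {0..T})"
  using der by (auto simp: U_eq U'_def zero_ext_def)

lemma U'_has_vector_derivative:
  "t \<in> {0..T} \<Longrightarrow> (U' k has_vector_derivative U'' k t) (at t within {0..T})"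
  using der by (auto simp: U'_eq U''_def zero_ext_def)

lemma continuous_on_U: "continuous_on {0..T} (U k)"
  using U_has_vector_derivative by (rule continuous_on_vector_derivative)

lemma continuous_on_U': "continuous_on {0..T} (U' k)"
  using U'_has_vector_derivative by (rule continuous_on_vector_derivative)

lemma node_equation:
  assumes "t \<in> {0<..<T}" "1 \<le> k" "k \<le> N"
  shows "(h/4) *\<^sub>R (U'' (k-1) t + 2 *\<^sub>R U'' k t + U'' (k+1) t)
       + (1/h) *\<^sub>R (2 *\<^sub>R U k t - U (k-1) t - U (k+1) t) + (h * a_node k) *\<^sub>R U k t = 0"
  using eq assms
  by (simp add: matvec_K_h matvec_M_h matvec_L_h U_def U''_def h_def a_node_def)

definition mean_vel :: "nat \<Rightarrow> real \<Rightarrow> complex" where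
  "mean_vel k t = (1/2) *\<^sub>R (U' k t + U' (Suc k) t)"
definition slope :: "nat \<Rightarrow> real \<Rightarrow> complex" where
  "slope k t = (1/h) *\<^sub>R (U (Suc k) t - U k t)"
definition edge_energy :: "nat \<Rightarrow> real \<Rightarrow> real" where
  "edge_energy k t = (norm (mean_vel k t))\<^sup>2 + (norm (slope k t))\<^sup>2"
definition potential :: "real \<Rightarrow> real" where
  "potential t = h * (\<Sum>k=1..N. a_node k * (norm (U k t))\<^sup>2)"
definition energy :: "real \<Rightarrow> real" where
  "energy t = norm1_sq a N (\<lambda>j. u j t) + normM_sq N (\<lambda>j. u' j t)"

lemma edge_energy_nonneg: "0 \<le> edge_energy k t"
  by (simp add: edge_energy_def)

lemma potential_nonneg: "0 \<le> potential t"
  unfolding potential_def using h_pos a_node_bounds by (auto intro!: mult_nonneg_nonneg sum_nonneg)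

lemma energy_eq_edge_sum: "energy t = h * (\<Sum>k\<le>N. edge_energy k t) + potential t"
proof -
  have "potential t = Re (cinner N (matvec N (L_h a N) (\<lambda>j. u j t)) (\<lambda>j. u j t))"
    unfolding potential_form_eq potential_def h_def a_node_def
    by (auto intro!: sum.cong simp: U_def zero_ext_def)
  then show ?thesis
    unfolding energy_def norm1_sq_split normM_sq_eq_edge_sum stiffness_form_eq_edge_sum
    by (simp add: edge_energy_def mean_vel_def slope_def U_def U'_def h_def sum.distrib
        distrib_left)
qed

lemma energy_has_vector_derivative:
  assumes t: "t \<in> {0..T}"
  shows "(energy has_vector_derivative
      2 * Re (cinner N (\<lambda>i. matvec N (M_h N) (\<lambda>j. u'' j t) i + matvec N (K_h N) (\<lambda>j. u j t) i
        + matvec N (L_h a N) (\<lambda>j. u j t) i) (\<lambda>j. u' j t))) (at t within {0..T})"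
proof -
  have sym: "K_h N i j + L_h a N i j = K_h N j i + L_h a N j i" "M_h N i j = M_h N j i" for i j
    by (auto simp: K_h_def L_h_def M_h_def)
  have "((\<lambda>s. norm1_sq a N (\<lambda>j. u j s)) has_vector_derivative
      2 * Re (cinner N (matvec N (\<lambda>i j. K_h N i j + L_h a N i j) (\<lambda>j. u j t)) (\<lambda>j. u' j t)))
      (at t within {0..T})"
    unfolding norm1_sq_def using der t by (intro quadratic_form_has_vector_derivative) (auto simp: sym)
  moreover have "((\<lambda>s. normM_sq N (\<lambda>j. u' j s)) has_vector_derivative
      2 * Re (cinner N (matvec N (M_h N) (\<lambda>j. u'' j t)) (\<lambda>j. u' j t))) (at t within {0..T})"
    unfolding normM_sq_def Re_cinner_matvec_commute[of N "M_h N" "\<lambda>j. u'' j t", OF sym(2)]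
    using der t by (intro quadratic_form_has_vector_derivative) (auto simp: sym)
  ultimately show ?thesis
    unfolding energy_def
    by (auto dest: has_vector_derivative_add
        simp: Re_cinner matvec_def sum.distrib distrib_right inner_add_left algebra_simps)
qed

lemma energy_conserved:
  assumes "t \<in> {0..T}"
  shows "energy t = energy 0"
proof (rule DERIV_isconst2[OF T_pos])
  show "continuous_on {0..T} energy"
    using energy_has_vector_derivative by (rule continuous_on_vector_derivative)
  fix x assume "0 < x" "x < T"
  then have "(energy has_vector_derivative 0) (at x)"
    using energy_has_vector_derivative[of x] eq at_within_Icc_at[of 0 x T] by (simp add: cinner_def)
  then show "DERIV energy x :> 0"
    by (simp add: has_real_derivative_iff_has_vector_derivative)
qed (use assms in auto)

section \<open>Sidewise energy estimates\<close>

definition averaged_vel :: "nat \<Rightarrow> real \<Rightarrow> complex" where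
  "averaged_vel k t = (1/4) *\<^sub>R (U' (k-1) t + 2 *\<^sub>R U' k t + U' (k+1) t)"
definition centered_slope :: "nat \<Rightarrow> real \<Rightarrow> complex" where
  "centered_slope k t = (1/(2*h)) *\<^sub>R (U (k+1) t - U (k-1) t)"
definition flux :: "nat \<Rightarrow> real \<Rightarrow> real" where
  "flux k t = averaged_vel k t \<bullet> centered_slope k t"

lemma flux_has_vector_derivative:
  assumes t: "t \<in> {0<..<T}" and k: "1 \<le> k" "k \<le> N"
  shows "(flux k has_vector_derivative (edge_energy k t - edge_energy (k-1) t) / (2*h)
            - a_node k * (U k t \<bullet> centered_slope k t)) (at t)"
proof -
  let ?W' = "(1/(2*h)) *\<^sub>R (U' (k+1) t - U' (k-1) t)"
  let ?V'' = "(1/4) *\<^sub>R (U'' (k-1) t + 2 *\<^sub>R U'' k t + U'' (k+1) t)"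
  have "(flux k has_vector_derivative averaged_vel k t \<bullet> ?W' + ?V'' \<bullet> centered_slope k t)
      (at t within {0..T})"
    unfolding flux_def[abs_def] averaged_vel_def centered_slope_def using t
    by (intro has_vector_derivative_inner has_vector_derivative_scaleR_right has_vector_derivative_add
        has_vector_derivative_diff U_has_vector_derivative U'_has_vector_derivative) auto
  then have deriv: "(flux k has_vector_derivative averaged_vel k t \<bullet> ?W' + ?V'' \<bullet> centered_slope k t) (at t)"
    using t at_within_Icc_at[of 0 t T] by auto
  have "edge_energy k t - edge_energy (k-1) t
      = 2*h*(averaged_vel k t \<bullet> ?W' + ?V'' \<bullet> centered_slope k t)
        + 2*h*a_node k*(U k t \<bullet> centered_slope k t)"
    using sidewise_identity[OF h_pos node_equation[OF t k], where p = "U' (k-1) t" and q = "U' k t"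
        and r = "U' (k+1) t"] k
    unfolding edge_energy_def mean_vel_def slope_def averaged_vel_def centered_slope_def
    by (simp add: add.commute)
  then have "(edge_energy k t - edge_energy (k-1) t) / (2*h) - a_node k * (U k t \<bullet> centered_slope k t)
      = averaged_vel k t \<bullet> ?W' + ?V'' \<bullet> centered_slope k t"
    using h_pos by (simp add: field_simps)
  then show ?thesis using deriv by simp
qed

definition edge_integral :: "nat \<Rightarrow> real" where
  "edge_integral k = integral {0..T} (edge_energy k)"

lemma continuous_on_edge_energy: "continuous_on {0..T} (edge_energy k)"
  unfolding edge_energy_def[abs_def] mean_vel_def slope_def
  by (intro continuous_intros continuous_on_U continuous_on_U')

lemma has_integral_edge_energy: "(edge_energy k has_integral edge_integral k) {0..T}"
  unfolding edge_integral_def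
  by (intro integrable_integral integrable_continuous_interval continuous_on_edge_energy)

lemma edge_integral_nonneg: "0 \<le> edge_integral k"
  using has_integral_nonneg[OF has_integral_edge_energy] edge_energy_nonneg by blast

lemma continuous_on_coupling: "continuous_on {0..T} (\<lambda>t. U k t \<bullet> centered_slope k t)"
  unfolding centered_slope_def by (intro continuous_intros continuous_on_U)

lemma edge_integral_diff:
  assumes k: "1 \<le> k" "k \<le> N"
  shows "edge_integral k - edge_integral (k-1)
    = 2*h*(flux k T - flux k 0) + 2*h*a_node k * integral {0..T} (\<lambda>t. U k t \<bullet> centered_slope k t)"
proof -
  let ?f = "\<lambda>t. (edge_energy k t - edge_energy (k-1) t) / (2*h) - a_node k * (U k t \<bullet> centered_slope k t)"
  let ?R = "integral {0..T} (\<lambda>t. U k t \<bullet> centered_slope k t)"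
  have "((\<lambda>t. U k t \<bullet> centered_slope k t) has_integral ?R) {0..T}"
    by (intro integrable_integral integrable_continuous_interval continuous_on_coupling)
  then have "(?f has_integral (edge_integral k - edge_integral (k-1)) / (2*h) - a_node k * ?R) {0..T}"
    by (intro has_integral_diff has_integral_divide has_integral_mult_right has_integral_edge_energy)
  moreover have "(?f has_integral flux k T - flux k 0) {0..T}"
  proof (rule fundamental_theorem_of_calculus_interior)
    show "continuous_on {0..T} (flux k)"
      unfolding flux_def[abs_def] averaged_vel_def centered_slope_def
      by (intro continuous_intros continuous_on_U continuous_on_U')
  qed (use T_pos flux_has_vector_derivative k in auto)
  ultimately have "(edge_integral k - edge_integral (k-1)) / (2*h) - a_node k * ?R = flux k T - flux k 0"
    by (rule has_integral_unique)
  then show ?thesis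
    using h_pos by (simp add: field_simps)
qed

lemma averaged_vel_eq_mean: "1 \<le> k \<Longrightarrow> averaged_vel k t = (1/2) *\<^sub>R (mean_vel (k-1) t + mean_vel k t)"
  by (simp add: averaged_vel_def mean_vel_def algebra_simps)

lemma centered_slope_eq_mean: "1 \<le> k \<Longrightarrow> centered_slope k t = (1/2) *\<^sub>R (slope (k-1) t + slope k t)"
  using h_pos by (simp add: centered_slope_def slope_def algebra_simps)

lemma norm_centered_slope_le:
  assumes "1 \<le> k"
  shows "(norm (centered_slope k t))\<^sup>2 \<le> (edge_energy (k-1) t + edge_energy k t) / 2"
proof -
  have "(norm (centered_slope k t))\<^sup>2 \<le> ((norm (slope (k-1) t))\<^sup>2 + (norm (slope k t))\<^sup>2) / 2"
    unfolding centered_slope_eq_mean[OF assms] by (rule norm_midpoint_power2_le)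
  moreover have "(norm (slope (k-1) t))\<^sup>2 + (norm (slope k t))\<^sup>2 \<le> edge_energy (k-1) t + edge_energy k t"
    unfolding edge_energy_def by (intro add_mono) simp_all
  ultimately show ?thesis by (smt (verit) divide_right_mono)
qed

lemma abs_flux_le:
  assumes "1 \<le> k"
  shows "2*h*\<bar>flux k t\<bar> \<le> (h/2)*(edge_energy (k-1) t + edge_energy k t)"
proof -
  have "\<bar>flux k t\<bar> \<le> ((norm (averaged_vel k t))\<^sup>2 + (norm (centered_slope k t))\<^sup>2) / 2"
    using abs_inner_le_weighted[of 1] by (simp add: flux_def)
  also have "\<dots> \<le> (edge_energy (k-1) t + edge_energy k t) / 4"
    using norm_midpoint_power2_le[of "mean_vel (k-1) t" "mean_vel k t"]
      norm_midpoint_power2_le[of "slope (k-1) t" "slope k t"]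
    unfolding averaged_vel_eq_mean[OF assms] centered_slope_eq_mean[OF assms] edge_energy_def
    by (simp add: field_simps)
  finally show ?thesis using h_pos by (simp add: mult_left_mono)
qed

lemma coupling_le:
  assumes k: "1 \<le> k" "k \<le> N"
  shows "2*h*a_node k*(U k t \<bullet> centered_slope k t)
    \<le> h*(B*(1+B))*(norm (U k t))\<^sup>2 + (h/2)*(edge_energy (k-1) t + edge_energy k t)"
proof -
  let ?W = "centered_slope k t"
  have "a_node k * (U k t \<bullet> ?W) \<le> B * \<bar>U k t \<bullet> ?W\<bar>"
    using a_node_bounds[OF k]
    by (meson abs_ge_self abs_ge_zero mult_left_mono mult_right_mono order_trans)
  then have "2*h*a_node k*(U k t \<bullet> ?W) \<le> 2*h*B*\<bar>U k t \<bullet> ?W\<bar>"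
    using h_pos by (simp add: mult.assoc)
  also have "\<dots> \<le> 2*h*B*(((1+B) * (norm (U k t))\<^sup>2 + (norm ?W)\<^sup>2 / (1+B)) / 2)"
    using abs_inner_le_weighted[of "1+B"] B_nonneg h_pos by (intro mult_left_mono) auto
  also have "\<dots> = h*(B*(1+B))*(norm (U k t))\<^sup>2 + h*(B/(1+B))*(norm ?W)\<^sup>2"
    using B_nonneg by (simp add: field_simps)
  also have "\<dots> \<le> h*(B*(1+B))*(norm (U k t))\<^sup>2 + h*((edge_energy (k-1) t + edge_energy k t) / 2)"
  proof -
    have "(B/(1+B))*(norm ?W)\<^sup>2 \<le> 1*((edge_energy (k-1) t + edge_energy k t) / 2)"
      using norm_centered_slope_le[OF k(1)] B_nonneg by (intro mult_mono) auto
    then have "h*((B/(1+B))*(norm ?W)\<^sup>2) \<le> h*((edge_energy (k-1) t + edge_energy k t) / 2)"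
      using h_pos by (intro mult_left_mono) auto
    then show ?thesis by (simp only: mult.assoc add_left_mono)
  qed
  finally show ?thesis by simp
qed

lemma norm_U_le_edge_sum:
  assumes "k \<le> N + 1"
  shows "(norm (U k t))\<^sup>2 \<le> h * (\<Sum>i<k. edge_energy i t)"
proof -
  have "U k t = (\<Sum>i<k. h *\<^sub>R slope i t)"
    using sum_lessThan_telescope[of "\<lambda>i. U i t" k] h_pos by (simp add: slope_def)
  then have "norm (U k t) \<le> (\<Sum>i<k. h * norm (slope i t))"
    using norm_sum[of "\<lambda>i. h *\<^sub>R slope i t" "{..<k}"] h_pos by simp
  then have "(norm (U k t))\<^sup>2 \<le> (\<Sum>i<k. h * norm (slope i t))\<^sup>2"
    by (simp add: power_mono)
  also have "\<dots> \<le> (\<Sum>i<k. (h * norm (slope i t))\<^sup>2) * card {..<k}"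
    by (rule sum_squared_le_sum_of_squares)
  also have "\<dots> = (h * real k) * (h * (\<Sum>i<k. (norm (slope i t))\<^sup>2))"
    by (simp add: power_mult_distrib sum_distrib_left mult_ac power2_eq_square)
  also have "\<dots> \<le> 1 * (h * (\<Sum>i<k. (norm (slope i t))\<^sup>2))"
  proof (rule mult_right_mono)
    have "h * real k \<le> h * (real N + 1)" using assms h_pos by (intro mult_left_mono) auto
    then show "h * real k \<le> 1" using h_mult_nodes by simp
  qed (use h_pos in \<open>auto intro!: sum_nonneg mult_nonneg_nonneg\<close>)
  also have "\<dots> \<le> h * (\<Sum>i<k. edge_energy i t)"
    using h_pos by (auto intro!: mult_left_mono sum_mono simp: edge_energy_def)
  finally show ?thesis .
qed

lemma potential_le: "potential t \<le> B * (h * (\<Sum>k\<le>N. edge_energy k t))"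
proof -
  have "(\<Sum>k=1..N. a_node k * (norm (U k t))\<^sup>2) \<le> (\<Sum>k=1..N. B * (h * (\<Sum>i\<le>N. edge_energy i t)))"
  proof (rule sum_mono)
    fix k assume k: "k \<in> {1..N}"
    have "a_node k * (norm (U k t))\<^sup>2 \<le> B * (h * (\<Sum>i<k. edge_energy i t))"
      using a_node_bounds[of k] norm_U_le_edge_sum[of k t] k B_nonneg by (intro mult_mono) auto
    also have "\<dots> \<le> B * (h * (\<Sum>i\<le>N. edge_energy i t))"
      using k B_nonneg h_pos edge_energy_nonneg by (intro mult_left_mono sum_mono2) auto
    finally show "a_node k * (norm (U k t))\<^sup>2 \<le> B * (h * (\<Sum>i\<le>N. edge_energy i t))" .
  qed
  then have "potential t \<le> (h * real N) * (B * (h * (\<Sum>k\<le>N. edge_energy k t)))"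
    unfolding potential_def using h_pos by (simp add: mult.assoc mult_left_mono)
  also have "\<dots> \<le> B * (h * (\<Sum>k\<le>N. edge_energy k t))"
    using h_mult_nodes h_pos B_nonneg edge_energy_nonneg
    by (intro mult_left_le_one_le mult_nonneg_nonneg sum_nonneg) (auto simp: algebra_simps)
  finally show ?thesis .
qed

lemma sum_adjacent_edge_energy_le:
  "(\<Sum>k=1..N. (h/2)*(edge_energy (k-1) t + edge_energy k t)) \<le> h * (\<Sum>k\<le>N. edge_energy k t)"
proof -
  have "(\<Sum>k=1..N. edge_energy (k-1) t) = (\<Sum>k<N. edge_energy k t)"
    by (simp add: sum.atLeast1_atMost_eq)
  also have "\<dots> \<le> (\<Sum>k\<le>N. edge_energy k t)"
    using edge_energy_nonneg by (intro sum_mono2) auto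
  finally have "(\<Sum>k=1..N. edge_energy (k-1) t) + (\<Sum>k=1..N. edge_energy k t) \<le> 2 * (\<Sum>k\<le>N. edge_energy k t)"
    using sum_mono2[of "{..N}" "{1..N}" "\<lambda>k. edge_energy k t"] edge_energy_nonneg by auto
  then have "(h/2) * ((\<Sum>k=1..N. edge_energy (k-1) t) + (\<Sum>k=1..N. edge_energy k t))
      \<le> (h/2) * (2 * (\<Sum>k\<le>N. edge_energy k t))"
    using h_pos by (intro mult_left_mono) auto
  then show ?thesis
    by (simp only: sum_distrib_left[symmetric] sum.distrib)
qed

definition boundary_term :: "nat \<Rightarrow> real" where
  "boundary_term k = (h/2)*(edge_energy (k-1) 0 + edge_energy k 0 + edge_energy (k-1) T + edge_energy k T)"

lemma edge_integral_step:
  assumes k: "1 \<le> k" "k \<le> N"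
  shows "edge_integral k \<le> edge_integral (k-1) + boundary_term k
    + h*(B*(1+B))*(h*(\<Sum>i<k. edge_integral i)) + (h/2)*(edge_integral (k-1) + edge_integral k)"
proof -
  have "flux k T - flux k 0 \<le> \<bar>flux k T\<bar> + \<bar>flux k 0\<bar>" by linarith
  then have "2*h*(flux k T - flux k 0) \<le> 2*h*\<bar>flux k T\<bar> + 2*h*\<bar>flux k 0\<bar>"
    using h_pos by (simp add: distrib_left[symmetric] mult_left_mono)
  also have "\<dots> \<le> boundary_term k"
    using abs_flux_le[OF k(1), of T] abs_flux_le[OF k(1), of 0] by (simp add: boundary_term_def algebra_simps)
  finally have flux: "2*h*(flux k T - flux k 0) \<le> boundary_term k" .
  have "2*h*a_node k * integral {0..T} (\<lambda>t. U k t \<bullet> centered_slope k t)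
      \<le> h*(B*(1+B))*(h*(\<Sum>i<k. edge_integral i)) + (h/2)*(edge_integral (k-1) + edge_integral k)"
  proof (rule has_integral_le)
    show "((\<lambda>t. 2*h*a_node k*(U k t \<bullet> centered_slope k t)) has_integral
        2*h*a_node k * integral {0..T} (\<lambda>t. U k t \<bullet> centered_slope k t)) {0..T}"
      by (intro has_integral_mult_right integrable_integral integrable_continuous_interval
          continuous_on_coupling)
    show "((\<lambda>t. h*(B*(1+B))*(h*(\<Sum>i<k. edge_energy i t)) + (h/2)*(edge_energy (k-1) t + edge_energy k t))
        has_integral h*(B*(1+B))*(h*(\<Sum>i<k. edge_integral i)) + (h/2)*(edge_integral (k-1) + edge_integral k))
        {0..T}"
      by (intro has_integral_add has_integral_mult_right has_integral_sum has_integral_edge_energy) auto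
    fix t
    have "h*(B*(1+B))*(norm (U k t))\<^sup>2 \<le> h*(B*(1+B))*(h*(\<Sum>i<k. edge_energy i t))"
      using norm_U_le_edge_sum[of k t] k h_pos B_nonneg by (intro mult_left_mono) auto
    then show "2*h*a_node k*(U k t \<bullet> centered_slope k t)
        \<le> h*(B*(1+B))*(h*(\<Sum>i<k. edge_energy i t)) + (h/2)*(edge_energy (k-1) t + edge_energy k t)"
      using coupling_le[OF k, of t] by linarith
  qed
  then show ?thesis
    using edge_integral_diff[OF k] flux by linarith
qed

section \<open>Observability\<close>

lemma edge_sum_le_energy:
  assumes "t \<in> {0..T}"
  shows "h * (\<Sum>k\<le>N. edge_energy k t) \<le> energy 0"
  using energy_conserved[OF assms] energy_eq_edge_sum[of t] potential_nonneg[of t] by linarith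

lemma energy_le_edge_sum:
  assumes "t \<in> {0..T}"
  shows "energy 0 \<le> (1 + B) * (h * (\<Sum>k\<le>N. edge_energy k t))"
  using energy_conserved[OF assms] energy_eq_edge_sum[of t] potential_le[of t]
  by (simp add: algebra_simps)

lemma sum_boundary_term_le: "(\<Sum>k=1..N. boundary_term k) \<le> 2 * energy 0"
proof -
  have "(\<Sum>k=1..N. boundary_term k) = (\<Sum>k=1..N. (h/2)*(edge_energy (k-1) 0 + edge_energy k 0))
      + (\<Sum>k=1..N. (h/2)*(edge_energy (k-1) T + edge_energy k T))"
    by (simp add: boundary_term_def sum.distrib[symmetric] algebra_simps)
  also have "\<dots> \<le> h * (\<Sum>k\<le>N. edge_energy k 0) + h * (\<Sum>k\<le>N. edge_energy k T)"
    by (intro add_mono sum_adjacent_edge_energy_le)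
  also have "\<dots> \<le> 2 * energy 0"
    using edge_sum_le_energy[of 0] edge_sum_le_energy[of T] T_pos by auto
  finally show ?thesis .
qed

lemma observability_estimate:
  defines "\<gamma> \<equiv> 2 + 2*(B*(1+B))"
  shows "T / (1+B) * energy 0 \<le> exp \<gamma> * (edge_integral 0 + 4 * energy 0)"
proof -
  have "(\<Sum>k\<le>N. edge_integral k) \<le> (\<Sum>k\<le>N. exp \<gamma> * (edge_integral 0 + 4 * energy 0))"
  proof (rule sum_mono)
    fix k assume "k \<in> {..N}"
    then have k: "k \<le> N" by simp
    have "edge_integral k \<le> exp \<gamma> * (edge_integral 0 + 2*(\<Sum>j=1..k. boundary_term j))"
      unfolding \<gamma>_def using h_pos h_mult_nodes B_nonneg edge_integral_nonneg edge_integral_step k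
      by (intro discrete_gronwall[where N = N]) (auto simp: boundary_term_def edge_energy_nonneg)
    also have "\<dots> \<le> exp \<gamma> * (edge_integral 0 + 4 * energy 0)"
    proof -
      have "(\<Sum>j=1..k. boundary_term j) \<le> (\<Sum>j=1..N. boundary_term j)"
        using k h_pos edge_energy_nonneg by (intro sum_mono2) (auto simp: boundary_term_def)
      then show ?thesis using sum_boundary_term_le by simp
    qed
    finally show "edge_integral k \<le> exp \<gamma> * (edge_integral 0 + 4 * energy 0)" .
  qed
  then have "h * (\<Sum>k\<le>N. edge_integral k) \<le> h * (real N + 1) * (exp \<gamma> * (edge_integral 0 + 4 * energy 0))"
    using h_pos by (simp add: mult.assoc mult_left_mono add.commute)
  moreover have "T * (energy 0 / (1+B)) \<le> h * (\<Sum>k\<le>N. edge_integral k)"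
  proof (rule has_integral_le)
    show "((\<lambda>t. energy 0 / (1+B)) has_integral T * (energy 0 / (1+B))) {0..T}"
      using has_integral_const_real[of "energy 0 / (1+B)" 0 T] T_pos by simp
    show "((\<lambda>t. h * (\<Sum>k\<le>N. edge_energy k t)) has_integral h * (\<Sum>k\<le>N. edge_integral k)) {0..T}"
      by (intro has_integral_mult_right has_integral_sum has_integral_edge_energy) auto
    show "energy 0 / (1+B) \<le> h * (\<Sum>k\<le>N. edge_energy k t)" if "t \<in> {0..T}" for t
      using energy_le_edge_sum[OF that] B_nonneg by (simp add: field_simps)
  qed
  ultimately show ?thesis using h_mult_nodes by simp
qed

lemma observability:
  defines "\<gamma> \<equiv> 2 + 2*(B*(1+B))"
  assumes T: "(1+B)*(4*exp \<gamma> + 1) < T"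
  shows "energy 0 \<le> exp \<gamma> * edge_integral 0"
proof -
  have "0 \<le> energy 0"
    using energy_eq_edge_sum[of 0] potential_nonneg[of 0] h_pos edge_energy_nonneg
    by (simp add: sum_nonneg)
  moreover have "4 * exp \<gamma> + 1 < T / (1+B)" using T B_nonneg by (simp add: field_simps)
  ultimately have "(4 * exp \<gamma> + 1) * energy 0 \<le> T / (1+B) * energy 0"
    by (intro mult_right_mono) auto
  then show ?thesis
    using observability_estimate unfolding \<gamma>_def by (simp add: algebra_simps)
qed

lemma energy_initial:
  assumes "\<forall>j\<in>{1..N}. u j 0 = U0 j \<and> u' j 0 = U1 j"
  shows "energy 0 = norm1_sq a N U0 + normM_sq N U1"
  unfolding energy_def using assms by (intro arg_cong2[where f = "(+)"] norm1_sq_cong normM_sq_cong) auto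

lemma edge_integral_0_eq:
  "edge_integral 0 = integral {0..T} (\<lambda>t. (cmod (u 1 t / complex_of_real (mesh N)))\<^sup>2 + (cmod (u' 1 t / 2))\<^sup>2)"
  unfolding edge_integral_def edge_energy_def mean_vel_def slope_def
  using N_pos by (simp add: U_def U'_def zero_ext_def h_def norm_divide add.commute)

end

theorem theorem1:
  fixes a :: "real \<Rightarrow> real"
  assumes meas: "a \<in> borel_measurable (restrict_space lborel {0..1})"
    and bdd: "\<exists>B. \<forall>x\<in>{0..1}. a x \<le> B"
    and nonneg: "\<forall>x\<in>{0..1}. 0 \<le> a x"
  shows "\<exists>T0 > 0. \<exists>\<kappa>0 > 0. \<forall>N \<ge> 1. \<forall>T > T0.
    \<forall>(U0 :: nat \<Rightarrow> complex) (U1 :: nat \<Rightarrow> complex)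
     (u :: nat \<Rightarrow> real \<Rightarrow> complex) (u' :: nat \<Rightarrow> real \<Rightarrow> complex) (u'' :: nat \<Rightarrow> real \<Rightarrow> complex).
      (\<forall>j\<in>{1..N}. \<forall>t\<in>{0..T}.
          (u j has_vector_derivative u' j t) (at t within {0..T}) \<and>
          (u' j has_vector_derivative u'' j t) (at t within {0..T})) \<and>
      (\<forall>t\<in>{0<..<T}. \<forall>i\<in>{1..N}.
          matvec N (M_h N) (\<lambda>j. u'' j t) i
          + matvec N (K_h N) (\<lambda>j. u j t) i
          + matvec N (L_h a N) (\<lambda>j. u j t) i = 0) \<and>
      (\<forall>j\<in>{1..N}. u j 0 = U0 j \<and> u' j 0 = U1 j)
      \<longrightarrow> integral {0..T} (\<lambda>t. (cmod (u 1 t / complex_of_real (mesh N)))\<^sup>2 + (cmod (u' 1 t / 2))\<^sup>2)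
          \<ge> \<kappa>0 * (norm1_sq a N U0 + normM_sq N U1)"
proof -
  obtain B where B: "0 \<le> B" "\<forall>x\<in>{0..1}. a x \<le> B"
    using bdd by (meson max.cobounded2 max.coboundedI1)
  define \<gamma> where "\<gamma> = 2 + 2*(B*(1+B))"
  define T0 where "T0 = (1+B)*(4*exp \<gamma> + 1)"
  have T0_pos: "0 < T0"
    unfolding T0_def using B by (simp add: add_pos_nonneg)
  show ?thesis
  proof (rule exI[of _ T0], intro conjI T0_pos, rule exI[of _ "exp (-\<gamma>)"],
      intro conjI exp_gt_zero allI impI, goal_cases)
    case (1 N T U0 U1 u u' u'')
    then interpret semidiscrete_wave a B N T u u' u''
      using B nonneg T0_pos by unfold_locales auto
    have "exp (-\<gamma>) * (norm1_sq a N U0 + normM_sq N U1) = exp (-\<gamma>) * energy 0"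
      using 1(3) by (subst energy_initial[of U0 U1]) auto
    also have "\<dots> \<le> exp (-\<gamma>) * (exp \<gamma> * edge_integral 0)"
      using observability 1(2) unfolding \<gamma>_def T0_def by (intro mult_left_mono) auto
    also have "\<dots> = edge_integral 0"
      by (simp add: mult.assoc[symmetric] flip: exp_add)
    also have "\<dots> = integral {0..T} (\<lambda>t. (cmod (u 1 t / complex_of_real (mesh N)))\<^sup>2 + (cmod (u' 1 t / 2))\<^sup>2)"
      by (rule edge_integral_0_eq)
    finally show ?case .
  qed
qed

end
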